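(* Consider the drift-less setting with target $\rho_d=|\Psi\rangle\langle\Psi|$, and suppose $\rho_d$ is not DQLS. Suppose a QL Hamiltonian $H_c$ and QL noise operators $\{D_k\}$, in standard form with respect to $|\Psi\rangle$ ($D_k|\Psi\rangle=0$ for all $k$, $H_c|\Psi\rangle=h|\Psi\rangle$ with $h\in\mathbb R$), make $\rho_d$ GAS for $\mathcal L(H_c,\{D_k\})$. Then $\mathcal H_d=\mathrm{span}\{|\Psi\rangle\}$ is invariant under $H_c$, and there is no nonzero subspace $\mathcal K\subseteq\mathcal H_0$ with $\mathcal K\neq\mathcal H_d$ and $H_c\mathcal K\subseteq\mathcal K$. Moreover, $H_c'=H_c-hI$ is a QL Hamiltonian with $H_c'|\Psi\rangle=0$ and $\rho_d$ is GAS for $\mathcal L(H_c',\{D_k\})$.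
   Context: $\mathcal H=\bigotimes_{a=1}^n\mathcal H_a$ finite-dimensional with neighborhoods $\mathcal N_k\subsetneq\{1,\dots,n\}$. QL operator: $X_{\mathcal N_k}\otimes I_{\bar{\mathcal N}_k}$; QL Hamiltonian: sum of Hermitian QL operators. $\mathcal L(H,\{D_k\})(\rho)=-i[H,\rho]+\sum_k(D_k\rho D_k^\dagger-\frac12\{D_k^\dagger D_k,\rho\})$. GAS: $e^{\mathcal Lt}(\rho_0)\to\rho_d$ for every density operator $\rho_0$. $\rho_d$ is DQLS if there exist QL operators $D_k$ with $D_k|\Psi\rangle=0$ making $\rho_d$ GAS for $\mathcal L(0,\{D_k\})$. With $\rho_{\mathcal N_k}=\mathrm{Tr}_{\bar{\mathcal N}_k}\rho_d$, define $\mathcal H_0=\bigcap_k\mathrm{supp}(\rho_{\mathcal N_k}\otimes I_{\bar{\mathcal N}_k})$. *)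

theory Defs
  imports "HOL-Analysis.Analysis"
begin

text \<open>The global Hilbert space is complex^'c, where the finite basis index type 'c
is identified with the product of local basis sets via a coordinate map
coord :: 'c => ('s => 'l), 's being the (finite) set of sites and L a the basis
of the local space at site a.\<close>

definition tensor_coords :: "('c \<Rightarrow> 's \<Rightarrow> 'l) \<Rightarrow> ('s \<Rightarrow> 'l set) \<Rightarrow> bool" where
  "tensor_coords coord L \<longleftrightarrow> bij_betw coord UNIV (Pi UNIV L)"

definition mat_adj :: "complex^'c^'c \<Rightarrow> complex^'c^'c" where
  "mat_adj A = (\<chi> i j. cnj (A $ j $ i))"

definition hermitian :: "complex^'c^'c \<Rightarrow> bool" where
  "hermitian A \<longleftrightarrow> mat_adj A = A"

definition cmscale :: "complex \<Rightarrow> complex^'c^'c \<Rightarrow> complex^'c^'c" where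
  "cmscale c A = (\<chi> i j. c * A $ i $ j)"

definition cm_trace :: "complex^'c^'c \<Rightarrow> complex" where
  "cm_trace A = (\<Sum>i\<in>UNIV. A $ i $ i)"

definition qform :: "complex^'c^'c \<Rightarrow> complex^'c \<Rightarrow> complex" where
  "qform A v = (\<Sum>i\<in>UNIV. \<Sum>j\<in>UNIV. cnj (v $ i) * A $ i $ j * v $ j)"

definition density_op :: "complex^'c^'c \<Rightarrow> bool" where
  "density_op A \<longleftrightarrow> hermitian A \<and> (\<forall>v. 0 \<le> Re (qform A v)) \<and> cm_trace A = 1"

definition lindblad :: "complex^'c^'c \<Rightarrow> (complex^'c^'c) list \<Rightarrow> complex^'c^'c \<Rightarrow> complex^'c^'c" where
  "lindblad H Ds \<rho> =
     cmscale (- \<i>) (H ** \<rho> - \<rho> ** H) +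
     (\<Sum>D\<leftarrow>Ds. D ** \<rho> ** mat_adj D
               - cmscale (1/2) (mat_adj D ** D ** \<rho> + \<rho> ** (mat_adj D ** D)))"

definition evolve :: "(complex^'c^'c \<Rightarrow> complex^'c^'c) \<Rightarrow> real \<Rightarrow> complex^'c^'c \<Rightarrow> complex^'c^'c" where
  "evolve Lop t \<rho> = (\<Sum>n. (t ^ n / fact n) *\<^sub>R ((Lop ^^ n) \<rho>))"

definition GAS :: "(complex^'c^'c \<Rightarrow> complex^'c^'c) \<Rightarrow> complex^'c^'c \<Rightarrow> bool" where
  "GAS Lop \<rho>d \<longleftrightarrow> (\<forall>\<rho>0. density_op \<rho>0 \<longrightarrow> ((\<lambda>t. evolve Lop t \<rho>0) \<longlongrightarrow> \<rho>d) at_top)"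

definition proj :: "complex^'c \<Rightarrow> complex^'c^'c" where
  "proj \<Psi> = (\<chi> i j. \<Psi> $ i * cnj (\<Psi> $ j))"

definition unit_vec :: "complex^'c \<Rightarrow> bool" where
  "unit_vec \<Psi> \<longleftrightarrow> (\<Sum>i\<in>UNIV. (cmod (\<Psi> $ i))\<^sup>2) = 1"

definition agree_out :: "('c \<Rightarrow> 's \<Rightarrow> 'l) \<Rightarrow> 's set \<Rightarrow> 'c \<Rightarrow> 'c \<Rightarrow> bool" where
  "agree_out coord N c c' \<longleftrightarrow> (\<forall>a. a \<notin> N \<longrightarrow> coord c a = coord c' a)"

definition agree_on :: "('c \<Rightarrow> 's \<Rightarrow> 'l) \<Rightarrow> 's set \<Rightarrow> 'c \<Rightarrow> 'c \<Rightarrow> bool" where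
  "agree_on coord N c c' \<longleftrightarrow> (\<forall>a\<in>N. coord c a = coord c' a)"

text \<open>M = X_N \<otimes> I_{complement of N}.\<close>
definition is_local :: "('c \<Rightarrow> 's \<Rightarrow> 'l) \<Rightarrow> 's set \<Rightarrow> complex^'c^'c \<Rightarrow> bool" where
  "is_local coord N M \<longleftrightarrow> (\<exists>X. \<forall>c c'. M $ c $ c' =
      (if agree_out coord N c c' then X (restrict (coord c) N) (restrict (coord c') N) else 0))"

definition QL_op :: "('c \<Rightarrow> 's \<Rightarrow> 'l) \<Rightarrow> ('k \<Rightarrow> 's set) \<Rightarrow> complex^'c^'c \<Rightarrow> bool" where
  "QL_op coord Nb M \<longleftrightarrow> (\<exists>k. is_local coord (Nb k) M)"

definition QL_ham :: "('c \<Rightarrow> 's \<Rightarrow> 'l) \<Rightarrow> ('k \<Rightarrow> 's set) \<Rightarrow> complex^'c^'c \<Rightarrow> bool" where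
  "QL_ham coord Nb H \<longleftrightarrow>
     (\<exists>Hs. (\<forall>X\<in>set Hs. hermitian X \<and> QL_op coord Nb X) \<and> H = sum_list Hs)"

definition DQLS :: "('c \<Rightarrow> 's \<Rightarrow> 'l) \<Rightarrow> ('k \<Rightarrow> 's set) \<Rightarrow> complex^'c \<Rightarrow> bool" where
  "DQLS coord Nb \<Psi> \<longleftrightarrow>
     (\<exists>Ds. (\<forall>D\<in>set Ds. QL_op coord Nb D \<and> D *v \<Psi> = 0) \<and> GAS (lindblad 0 Ds) (proj \<Psi>))"

text \<open>rho_N \<otimes> I, where rho_N is the partial trace of rho over the complement of N.\<close>
definition ptr_ext :: "('c \<Rightarrow> 's \<Rightarrow> 'l) \<Rightarrow> 's set \<Rightarrow> complex^'c^'c \<Rightarrow> complex^'c^'c" where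
  "ptr_ext coord N \<rho> = (\<chi> c c'.
     if agree_out coord N c c'
     then (\<Sum>(e, e')\<in>{(e, e'). agree_on coord N e c \<and> agree_on coord N e' c' \<and> agree_out coord N e e'}.
             \<rho> $ e $ e')
     else 0)"

definition supp :: "complex^'c^'c \<Rightarrow> (complex^'c) set" where
  "supp A = range (\<lambda>v. A *v v)"

definition H0 :: "('c \<Rightarrow> 's \<Rightarrow> 'l) \<Rightarrow> ('k \<Rightarrow> 's set) \<Rightarrow> complex^'c^'c \<Rightarrow> (complex^'c) set" where
  "H0 coord Nb \<rho> = (\<Inter>k. supp (ptr_ext coord (Nb k) \<rho>))"

definition csubspace :: "(complex^'c) set \<Rightarrow> bool" where
  "csubspace K \<longleftrightarrow> 0 \<in> K \<and> (\<forall>x\<in>K. \<forall>y\<in>K. x + y \<in> K) \<and> (\<forall>c. \<forall>x\<in>K. c *s x \<in> K)"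

definition cspan1 :: "complex^'c \<Rightarrow> (complex^'c) set" where
  "cspan1 \<Psi> = {c *s \<Psi> | c. True}"

end

theory Submission
  imports Defs
begin

text \<open>
  Noise operators that annihilate \<open>\<Psi>\<close> annihilate all of \<open>\<H>\<^sub>0\<close>: a local \<open>D\<close> acts on
  the reduced state \<open>\<rho>\<^sub>N \<otimes> I\<close> slice by slice, and each slice of \<open>\<Psi>\<close> is killed by \<open>D\<close>.
  Hence any \<open>H\<^sub>c\<close>-invariant subspace \<open>K \<subseteq> \<H>\<^sub>0\<close> is dark: the operators with range in
  \<open>K\<close> form a closed subspace preserved by the generator, so a state supported on \<open>K\<close> can only
  converge to \<open>|\<Psi>\<rangle>\<langle>\<Psi>|\<close> if \<open>\<Psi> \<in> K\<close>. Applied to \<open>K\<close> itself and, when \<open>\<Psi> \<in> K\<close>, to the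
  (still invariant, as \<open>H\<^sub>c\<close> is Hermitian) orthogonal complement of \<open>\<Psi>\<close> in \<open>K\<close>, this
  forces \<open>K = span {\<Psi>}\<close>. Shifting \<open>H\<^sub>c\<close> by a multiple of the identity leaves the commutator,
  hence the generator, unchanged.
\<close>

definition splice :: "('c \<Rightarrow> 's \<Rightarrow> 'l) \<Rightarrow> 's set \<Rightarrow> 'c \<Rightarrow> 'c \<Rightarrow> 'c" where
  "splice coord N c e = inv coord (\<lambda>a. if a \<in> N then coord c a else coord e a)"

lemma coord_splice:
  assumes "tensor_coords coord L"
  shows "coord (splice coord N c e) = (\<lambda>a. if a \<in> N then coord c a else coord e a)"
proof -
  have bij: "bij_betw coord UNIV (Pi UNIV L)" using assms by (simp add: tensor_coords_def)
  then have "coord c \<in> Pi UNIV L" "coord e \<in> Pi UNIV L" by (auto dest: bij_betw_apply)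
  then have "(\<lambda>a. if a \<in> N then coord c a else coord e a) \<in> range coord"
    using bij by (auto simp: bij_betw_def Pi_iff)
  then show ?thesis unfolding splice_def by (simp add: f_inv_into_f)
qed

lemma splice_eqI:
  assumes tc: "tensor_coords coord L"
    and "agree_on coord N x c" "agree_out coord N x e"
  shows "splice coord N c e = x"
proof -
  have "coord (splice coord N c e) = coord x"
    using assms(2,3) by (auto simp: coord_splice[OF tc] agree_on_def agree_out_def)
  moreover have "inj coord" using tc by (simp add: tensor_coords_def bij_betw_def)
  ultimately show ?thesis by (simp add: inj_eq)
qed

lemma agree_out_splice_left:
  assumes "tensor_coords coord L"
  shows "agree_out coord N (splice coord N c e) x \<longleftrightarrow> agree_out coord N e x"
  by (auto simp: agree_out_def coord_splice[OF assms])

text \<open>Writing \<open>x'\<close> for the configuration of \<open>x\<close> outside \<open>N\<close>, \<open>slice coord N z r v\<close> is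
  \<open>v(\<cdot>, r') \<otimes> |z'\<rangle>\<close>. The columns of the reduced state \<open>\<rho>\<^sub>N \<otimes> I\<close> of \<open>|\<Psi>\<rangle>\<langle>\<Psi>|\<close> are
  combinations of slices of \<open>\<Psi>\<close>.\<close>
definition slice :: "('c \<Rightarrow> 's \<Rightarrow> 'l) \<Rightarrow> 's set \<Rightarrow> 'c \<Rightarrow> 'c \<Rightarrow> complex^'c \<Rightarrow> complex^'c" where
  "slice coord N z r v = (\<chi> c. if agree_out coord N c z then v $ splice coord N c r else 0)"

lemma slice_zero [simp]: "slice coord N z r 0 = 0"
  by (simp add: slice_def vec_eq_iff)

lemma local_mult_slice:
  fixes D :: "complex^'c::finite^'c"
  assumes tc: "tensor_coords coord L" and loc: "is_local coord N D"
  shows "D *v slice coord N z r v = slice coord N z r (D *v v)"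
proof -
  obtain X where X: "\<And>c c'. D $ c $ c' = (if agree_out coord N c c'
      then X (restrict (coord c) N) (restrict (coord c') N) else 0)"
    using loc unfolding is_local_def by blast
  have "(D *v slice coord N z r v) $ c = (if agree_out coord N c z
      then (D *v v) $ splice coord N c r else 0)" for c
  proof (cases "agree_out coord N c z")
    case True
    have bij: "bij_betw (\<lambda>c'. splice coord N c' r) {c'. agree_out coord N c c'}
        {e. agree_out coord N r e}"
      by (rule bij_betwI[where g = "\<lambda>e. splice coord N e c"])
        (auto intro!: splice_eqI[OF tc] simp: agree_on_def agree_out_def coord_splice[OF tc])
    have restrict_splice: "restrict (coord (splice coord N c' r)) N = restrict (coord c') N" for c'
      by (simp add: coord_splice[OF tc] restrict_def fun_eq_iff)
    have "(D *v slice coord N z r v) $ c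
        = (\<Sum>c'\<in>UNIV. if agree_out coord N c c' then
             X (restrict (coord c) N) (restrict (coord c') N) * v $ splice coord N c' r else 0)"
      using True unfolding matrix_vector_mult_def slice_def X vec_lambda_beta
      by (intro sum.cong) (auto simp: agree_out_def)
    also have "\<dots> = (\<Sum>c'\<in>{c'. agree_out coord N c c'}.
             X (restrict (coord c) N) (restrict (coord c') N) * v $ splice coord N c' r)"
      by (simp add: sum.inter_filter[symmetric])
    also have "\<dots> = (\<Sum>e\<in>{e. agree_out coord N r e}.
             X (restrict (coord c) N) (restrict (coord e) N) * v $ e)"
      using sum.reindex_bij_betw[OF bij, of "\<lambda>e. X (restrict (coord c) N) (restrict (coord e) N) * v $ e"]
      by (simp add: restrict_splice)
    also have "\<dots> = (\<Sum>e\<in>UNIV. if agree_out coord N r e then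
             X (restrict (coord c) N) (restrict (coord e) N) * v $ e else 0)"
      by (simp add: sum.inter_filter[symmetric])
    also have "\<dots> = (D *v v) $ splice coord N c r"
      by (auto simp: matrix_vector_mult_def X restrict_splice agree_out_splice_left[OF tc]
          intro!: sum.cong)
    finally show ?thesis using True by simp
  next
    case False
    then have "\<not> (agree_out coord N c c' \<and> agree_out coord N c' z)" for c'
      unfolding agree_out_def by metis
    then show ?thesis using False by (auto simp: matrix_vector_mult_def slice_def X intro!: sum.neutral)
  qed
  then show ?thesis by (simp add: vec_eq_iff slice_def)
qed

lemma reduced_state_proj_entry:
  fixes \<Psi> :: "complex^'c::finite"
  assumes tc: "tensor_coords coord L"
  shows "ptr_ext coord N (proj \<Psi>) $ c' $ c'' =
    (\<Sum>r | agree_on coord N r c''. cnj (\<Psi> $ r) * slice coord N c'' r \<Psi> $ c')"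
proof (cases "agree_out coord N c' c''")
  case True
  let ?pairs = "{(e, e'). agree_on coord N e c' \<and> agree_on coord N e' c'' \<and> agree_out coord N e e'}"
  have "bij_betw (\<lambda>r. (splice coord N c' r, r)) {r. agree_on coord N r c''} ?pairs"
    by (rule bij_betwI[where g = snd])
      (auto intro!: splice_eqI[OF tc] simp: agree_on_def agree_out_def coord_splice[OF tc])
  then have "(\<Sum>(e, e')\<in>?pairs. proj \<Psi> $ e $ e') =
      (\<Sum>r | agree_on coord N r c''. cnj (\<Psi> $ r) * \<Psi> $ splice coord N c' r)"
    by (simp add: sum.reindex_bij_betw[symmetric] proj_def mult.commute)
  then show ?thesis
    using True unfolding ptr_ext_def slice_def by simp
next
  case False
  then show ?thesis by (simp add: ptr_ext_def slice_def)
qed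

lemma local_annihilator_mult_reduced_state:
  fixes D :: "complex^'c::finite^'c" and \<Psi> :: "complex^'c"
  assumes tc: "tensor_coords coord L" and loc: "is_local coord N D" and kill: "D *v \<Psi> = 0"
  shows "D ** ptr_ext coord N (proj \<Psi>) = 0"
proof -
  have "(D ** ptr_ext coord N (proj \<Psi>)) $ c $ c'' = 0" for c c''
  proof -
    have "(D ** ptr_ext coord N (proj \<Psi>)) $ c $ c'' =
        (\<Sum>r | agree_on coord N r c''. cnj (\<Psi> $ r) * (D *v slice coord N c'' r \<Psi>) $ c)"
      by (simp add: matrix_matrix_mult_def matrix_vector_mult_def reduced_state_proj_entry[OF tc]
          sum_distrib_left sum.swap[of _ UNIV] mult_ac)
    also have "\<dots> = 0"
      by (simp add: local_mult_slice[OF tc loc] kill)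
    finally show ?thesis .
  qed
  then show ?thesis by (simp add: vec_eq_iff)
qed

lemma QL_annihilator_vanishes_on_H0:
  fixes D :: "complex^'c::finite^'c"
  assumes tc: "tensor_coords coord L" and ql: "QL_op coord Nb D" and kill: "D *v \<Psi> = 0"
    and v: "v \<in> H0 coord Nb (proj \<Psi>)"
  shows "D *v v = 0"
proof -
  obtain k where loc: "is_local coord (Nb k) D" using ql by (auto simp: QL_op_def)
  from v obtain w where "v = ptr_ext coord (Nb k) (proj \<Psi>) *v w"
    by (auto simp: H0_def supp_def)
  then have "D *v v = (D ** ptr_ext coord (Nb k) (proj \<Psi>)) *v w"
    by (simp add: matrix_vector_mul_assoc)
  then show ?thesis by (simp add: local_annihilator_mult_reduced_state[OF tc loc kill])
qed

lemma is_local_scalar: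
  assumes "inj coord"
  shows "is_local coord N (cmscale a (mat 1))"
proof -
  have "c = c' \<longleftrightarrow> agree_out coord N c c' \<and> restrict (coord c) N = restrict (coord c') N" for c c'
    using assms by (auto simp: inj_eq[symmetric] agree_out_def restrict_def fun_eq_iff split: if_splits)
  then show ?thesis
    unfolding is_local_def
    by (intro exI[of _ "\<lambda>r r'. if r = r' then a else 0"]) (auto simp: cmscale_def mat_def)
qed

lemma hermitian_sum_list: "(\<And>X. X \<in> set Xs \<Longrightarrow> hermitian X) \<Longrightarrow> hermitian (sum_list Xs)"
  by (induction Xs) (auto simp: hermitian_def mat_adj_def vec_eq_iff)

lemma QL_ham_hermitian: "QL_ham coord Nb H \<Longrightarrow> hermitian H"
  by (auto simp: QL_ham_def intro: hermitian_sum_list)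

lemma QL_ham_diff_scalar:
  fixes H :: "complex^'c::finite^'c"
  assumes "inj coord" and "QL_ham coord Nb H"
  shows "QL_ham coord Nb (H - cmscale (of_real h) (mat 1))"
proof -
  obtain Hs where Hs: "\<forall>X\<in>set Hs. hermitian X \<and> QL_op coord Nb X" "H = sum_list Hs"
    using assms(2) by (auto simp: QL_ham_def)
  define E where "E = cmscale (- of_real h) (mat 1 :: complex^'c^'c)"
  have "hermitian E"
    by (simp add: E_def hermitian_def mat_adj_def cmscale_def mat_def vec_eq_iff)
  moreover have "QL_op coord Nb E"
    unfolding QL_op_def E_def using is_local_scalar[OF assms(1)] by blast
  moreover have "H - cmscale (of_real h) (mat 1) = sum_list (Hs @ [E])"
    by (simp add: Hs(2) E_def vec_eq_iff cmscale_def)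
  ultimately show ?thesis
    using Hs(1) unfolding QL_ham_def by (intro exI[of _ "Hs @ [E]"]) auto
qed

lemma matrix_add_rdistrib: "((A::'a::semiring_1^'n::finite^'m) + B) ** (C::'a^'p^'n) = A ** C + B ** C"
  by (simp add: vec_eq_iff matrix_matrix_mult_def sum.distrib distrib_right)

lemma matrix_diff_ldistrib: "(A::'a::ring_1^'n::finite^'m) ** (B - C) = A ** B - A ** (C::'a^'p^'n)"
  by (simp add: vec_eq_iff matrix_matrix_mult_def sum_subtractf right_diff_distrib)

lemma matrix_diff_rdistrib: "((A::'a::ring_1^'n::finite^'m) - B) ** (C::'a^'p^'n) = A ** C - B ** C"
  by (simp add: vec_eq_iff matrix_matrix_mult_def sum_subtractf left_diff_distrib)

lemma matrix_vector_mult_smult: "A *v (c *s v) = c *s (A *v (v::'a::comm_semiring_1^'n::finite))"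
  by (simp add: vec_eq_iff matrix_vector_mult_def sum_distrib_left mult_ac)

lemma sum_list_mult_vec: "(\<Sum>x\<leftarrow>xs. F x) *v (v::'a::semiring_1^'n::finite) = (\<Sum>x\<leftarrow>xs. F x *v v)"
  by (induction xs) (simp_all add: matrix_vector_mult_add_rdistrib)

lemma linear_matrix_mult_left:
  fixes A :: "'a::real_algebra_1^'n::finite^'m"
  assumes "linear f" shows "linear (\<lambda>x. A ** (f x :: 'a^'p^'n))"
  using assms unfolding linear_iff
  by (simp add: matrix_add_ldistrib matrix_scalar_ac scalar_matrix_assoc[symmetric])

lemma linear_matrix_mult_right:
  fixes B :: "'a::real_algebra_1^'p::finite^'n::finite"
  assumes "linear f" shows "linear (\<lambda>x. (f x :: 'a^'n^'m) ** B)"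
  using assms unfolding linear_iff by (simp add: matrix_add_rdistrib scalar_matrix_assoc[symmetric])

lemma linear_cmscale:
  assumes "linear f" shows "linear (\<lambda>x. cmscale c (f x))"
  using assms unfolding linear_iff
  by (simp add: cmscale_def vec_eq_iff distrib_left scaleR_conv_of_real mult_ac)

lemma linear_sum_list:
  "(\<And>y. y \<in> set ys \<Longrightarrow> linear (g y)) \<Longrightarrow> linear (\<lambda>x. \<Sum>y\<leftarrow>ys. g y x)"
  by (induction ys) (auto intro: linear_compose_add linear_zero)

lemma linear_lindblad: "linear (lindblad (H :: complex^'c::finite^'c) Ds)"
  unfolding lindblad_def
  by (intro linear_compose_add linear_compose_sub linear_sum_list linear_cmscale
      linear_matrix_mult_left linear_matrix_mult_right linear_ident)

lemma cmscale_mult_vec: "cmscale c (A::complex^'n::finite^'n) *v v = c *s (A *v v)"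
  by (simp add: vec_eq_iff cmscale_def matrix_vector_mult_def sum_distrib_left mult_ac)

lemma lindblad_mult_vec:
  "lindblad H Ds \<rho> *v v = (- \<i>) *s (H *v (\<rho> *v v) - \<rho> *v (H *v v)) +
     (\<Sum>D\<leftarrow>Ds. D *v (\<rho> *v (mat_adj D *v v))
        - (1/2) *s (mat_adj D *v (D *v (\<rho> *v v)) + \<rho> *v (mat_adj D *v (D *v v))))"
  by (simp add: lindblad_def sum_list_mult_vec cmscale_mult_vec matrix_vector_mult_diff_rdistrib
      matrix_vector_mult_add_rdistrib matrix_vector_mul_assoc matrix_mul_assoc)

lemma lindblad_diff_scalar: "lindblad (H - cmscale c (mat 1)) Ds = lindblad H Ds"
proof -
  have "(H - cmscale c (mat 1)) ** \<rho> - \<rho> ** (H - cmscale c (mat 1)) = H ** \<rho> - \<rho> ** H" for \<rho>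
  proof -
    have "cmscale c (mat 1) ** \<rho> = \<rho> ** cmscale c (mat 1)"
      by (simp add: vec_eq_iff cmscale_def matrix_matrix_mult_def mat_def if_distrib if_distribR
          mult.commute cong: if_cong)
    then show ?thesis by (simp add: matrix_diff_rdistrib matrix_diff_ldistrib)
  qed
  then show ?thesis by (simp add: lindblad_def fun_eq_iff)
qed

lemma evolve_mem_subspace:
  fixes f :: "complex^'c::finite^'c \<Rightarrow> complex^'c^'c"
  assumes V: "subspace V" and lin: "linear f" and inv: "\<And>x. x \<in> V \<Longrightarrow> f x \<in> V" and x: "x \<in> V"
  shows "evolve f t x \<in> V"
proof -
  have iter: "(f ^^ n) x \<in> V" for n by (induction n) (simp_all add: x inv)
  obtain K where K: "K > 0" "\<And>y. norm (f y) \<le> norm y * K"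
    using lin linear_conv_bounded_linear bounded_linear.pos_bounded by blast
  have norm_iter: "norm ((f ^^ n) x) \<le> K ^ n * norm x" for n
  proof (induction n)
    case (Suc n)
    have "norm ((f ^^ Suc n) x) \<le> norm ((f ^^ n) x) * K" using K(2) by simp
    also have "\<dots> \<le> K ^ n * norm x * K" using Suc K(1) by (simp add: mult_right_mono)
    finally show ?case by (simp add: mult_ac)
  qed simp
  define a where "a n = (t ^ n / fact n) *\<^sub>R (f ^^ n) x" for n
  have "summable (\<lambda>n. (\<bar>t\<bar> * K) ^ n / fact n * norm x)"
    using summable_exp[of "\<bar>t\<bar> * K"] by (intro summable_mult2) (simp add: divide_inverse mult_ac)
  moreover have "norm (a n) \<le> (\<bar>t\<bar> * K) ^ n / fact n * norm x" for n
  proof -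
    have "norm (a n) = \<bar>t\<bar> ^ n / fact n * norm ((f ^^ n) x)" by (simp add: a_def power_abs)
    also have "\<dots> \<le> \<bar>t\<bar> ^ n / fact n * (K ^ n * norm x)"
      by (rule mult_left_mono[OF norm_iter]) simp
    finally show ?thesis by (simp add: power_mult_distrib)
  qed
  ultimately have "summable a" by (rule summable_comparison_test'[where N = 0])
  moreover have "(\<Sum>i<n. a i) \<in> V" for n
    using V iter by (auto simp: a_def intro!: subspace_sum subspace_scale)
  ultimately have "suminf a \<in> V"
    by (intro Lim_in_closed_set[OF closed_subspace[OF V] _ _ summable_LIMSEQ]) auto
  then show ?thesis unfolding evolve_def a_def .
qed

definition cinner :: "complex^'c::finite \<Rightarrow> complex^'c \<Rightarrow> complex" where
  "cinner x y = (\<Sum>j\<in>UNIV. cnj (x $ j) * y $ j)"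

lemma cinner_add_right: "cinner x (y + z) = cinner x y + cinner x z"
  by (simp add: cinner_def sum.distrib distrib_left)

lemma cinner_diff_right: "cinner x (y - z) = cinner x y - cinner x z"
  by (simp add: cinner_def sum_subtractf right_diff_distrib)

lemma cinner_scale_right: "cinner x (c *s y) = c * cinner x y"
  by (simp add: cinner_def sum_distrib_left mult_ac)

lemma cinner_scale_left: "cinner (c *s x) y = cnj c * cinner x y"
  by (simp add: cinner_def sum_distrib_left mult_ac)

lemma cinner_zero_right: "cinner x 0 = 0"
  by (simp add: cinner_def)

lemma unit_vec_cinner_self: "unit_vec \<Psi> \<Longrightarrow> cinner \<Psi> \<Psi> = 1"
proof -
  assume "unit_vec \<Psi>"
  have "cinner \<Psi> \<Psi> = (\<Sum>j\<in>UNIV. of_real ((cmod (\<Psi> $ j))\<^sup>2))"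
    unfolding cinner_def by (intro sum.cong refl) (metis complex_norm_square mult.commute)
  also have "\<dots> = of_real (\<Sum>j\<in>UNIV. (cmod (\<Psi> $ j))\<^sup>2)" by (simp only: of_real_sum)
  also have "\<dots> = 1" using \<open>unit_vec \<Psi>\<close> by (simp add: unit_vec_def)
  finally show ?thesis .
qed

lemma proj_mult_vec: "proj \<phi> *v v = cinner \<phi> v *s \<phi>"
  by (simp add: vec_eq_iff proj_def matrix_vector_mult_def cinner_def sum_distrib_left mult_ac)

lemma hermitian_cinner_mult:
  fixes A :: "complex^'c::finite^'c"
  assumes "hermitian A" shows "cinner x (A *v y) = cinner (A *v x) y"
proof -
  have entry: "cnj (A $ j $ i) = A $ i $ j" for i j
    using assms unfolding hermitian_def mat_adj_def by (metis vec_lambda_beta)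
  have "cinner x (A *v y) = (\<Sum>j\<in>UNIV. \<Sum>k\<in>UNIV. cnj (x $ j) * A $ j $ k * y $ k)"
    by (simp add: cinner_def matrix_vector_mult_def sum_distrib_left mult_ac)
  also have "\<dots> = (\<Sum>k\<in>UNIV. \<Sum>j\<in>UNIV. cnj (x $ j) * A $ j $ k * y $ k)" by (rule sum.swap)
  also have "\<dots> = cinner (A *v x) y"
    by (simp add: cinner_def matrix_vector_mult_def sum_distrib_left sum_distrib_right entry mult_ac)
  finally show ?thesis .
qed

lemma density_op_proj: "unit_vec \<phi> \<Longrightarrow> density_op (proj \<phi>)"
proof -
  assume \<phi>: "unit_vec \<phi>"
  have "qform (proj \<phi>) v = cnj (cinner \<phi> v) * cinner \<phi> v" for v
    by (simp add: qform_def proj_def cinner_def sum_product cnj_sum mult_ac)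
  then have "0 \<le> Re (qform (proj \<phi>) v)" for v
    by (simp add: complex_norm_square[symmetric] mult.commute[of "cnj _"])
  moreover have "cm_trace (proj \<phi>) = 1"
    using unit_vec_cinner_self[OF \<phi>] by (simp add: cm_trace_def proj_def cinner_def mult.commute)
  ultimately show ?thesis
    by (simp add: density_op_def hermitian_def mat_adj_def proj_def vec_eq_iff)
qed

lemma unit_vec_normalize:
  fixes u :: "complex^'c::finite"
  assumes "u \<noteq> 0"
  shows "unit_vec (of_real (1 / norm u) *s u)"
proof -
  have norm2: "(norm u)\<^sup>2 = (\<Sum>i\<in>UNIV. (cmod (u $ i))\<^sup>2)"
    by (simp add: norm_vec_def L2_set_def sum_nonneg)
  have "(\<Sum>i\<in>UNIV. (cmod ((of_real (1 / norm u) *s u) $ i))\<^sup>2)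
      = (\<Sum>i\<in>UNIV. (1 / norm u)\<^sup>2 * (cmod (u $ i))\<^sup>2)"
    by (simp add: norm_divide power_divide)
  also have "\<dots> = (1 / norm u)\<^sup>2 * (norm u)\<^sup>2" by (simp add: norm2 sum_distrib_left)
  also have "\<dots> = 1" using assms by (simp add: power_divide)
  finally show ?thesis by (simp add: unit_vec_def)
qed

lemma csubspace_diff: "csubspace K \<Longrightarrow> x \<in> K \<Longrightarrow> y \<in> K \<Longrightarrow> x - y \<in> K"
  unfolding csubspace_def by (metis add.commute diff_conv_add_uminus scalar_mult_eq_scaleR
      scaleR_minus1_left vector_smult_lneg vector_smult_lid)

lemma csubspace_sum_list: "csubspace K \<Longrightarrow> (\<And>x. x \<in> set xs \<Longrightarrow> F x \<in> K) \<Longrightarrow> (\<Sum>x\<leftarrow>xs. F x) \<in> K"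
  by (induction xs) (auto simp: csubspace_def)

lemma GAS_target_in_dark_invariant_subspace:
  fixes H :: "complex^'c::finite^'c"
  assumes K: "csubspace K" and inv: "\<forall>v\<in>K. H *v v \<in> K"
    and dark: "\<forall>D\<in>set Ds. \<forall>v\<in>K. D *v v = 0"
    and \<phi>: "\<phi> \<in> K" "unit_vec \<phi>" and \<Psi>: "unit_vec \<Psi>"
    and gas: "GAS (lindblad H Ds) (proj \<Psi>)"
  shows "\<Psi> \<in> K"
proof -
  define V where "V = {\<rho> :: complex^'c^'c. \<forall>v. \<rho> *v v \<in> K}"
  have K_closed: "0 \<in> K" "x \<in> K \<Longrightarrow> y \<in> K \<Longrightarrow> x + y \<in> K" "x \<in> K \<Longrightarrow> c *s x \<in> K" for x y c
    using K by (auto simp: csubspace_def)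
  have "(r *\<^sub>R \<rho>) *v v = of_real r *s (\<rho> *v v)" for r and \<rho> :: "complex^'c^'c" and v
    by (simp add: vec_eq_iff matrix_vector_mult_def sum_distrib_left mult_ac
        scaleR_conv_of_real[where 'a=complex])
  then have "subspace V"
    using K_closed by (simp add: subspace_def V_def matrix_vector_mult_add_rdistrib)
  moreover have "lindblad H Ds \<rho> \<in> V" if "\<rho> \<in> V" for \<rho>
  proof -
    have range: "\<rho> *v w \<in> K" for w using that by (simp add: V_def)
    \<comment> \<open>every \<open>D\<close> vanishes on \<open>K\<close>, which contains the range of \<open>\<rho>\<close>; the other terms lie
      in \<open>K\<close> by \<open>H\<close>-invariance\<close>
    have "lindblad H Ds \<rho> *v v \<in> K" for v
      unfolding lindblad_mult_vec using range inv dark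
      by (intro K_closed csubspace_diff[OF K] csubspace_sum_list[OF K]) (simp_all add: K_closed(1))
    then show ?thesis by (simp add: V_def)
  qed
  moreover have "proj \<phi> \<in> V" using \<phi>(1) K_closed by (simp add: V_def proj_mult_vec)
  ultimately have "evolve (lindblad H Ds) t (proj \<phi>) \<in> V" for t
    by (intro evolve_mem_subspace linear_lindblad)
  moreover have "((\<lambda>t. evolve (lindblad H Ds) t (proj \<phi>)) \<longlongrightarrow> proj \<Psi>) at_top"
    using gas density_op_proj[OF \<phi>(2)] by (simp add: GAS_def)
  ultimately have "proj \<Psi> \<in> V"
    by (intro Lim_in_closed_set[OF closed_subspace[OF \<open>subspace V\<close>]]) auto
  then have "proj \<Psi> *v \<Psi> \<in> K" by (simp add: V_def)
  then show ?thesis by (simp add: proj_mult_vec unit_vec_cinner_self[OF \<Psi>])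
qed

lemma dark_invariant_subspace_eq_span:
  fixes H :: "complex^'c::finite^'c"
  assumes K: "csubspace K" "K \<noteq> {0}" and inv: "\<forall>v\<in>K. H *v v \<in> K"
    and dark: "\<forall>D\<in>set Ds. \<forall>v\<in>K. D *v v = 0"
    and herm: "hermitian H" and eig: "H *v \<Psi> = of_real h *s \<Psi>"
    and \<Psi>: "unit_vec \<Psi>" and gas: "GAS (lindblad H Ds) (proj \<Psi>)"
  shows "K = cspan1 \<Psi>"
proof
  have K_closed: "0 \<in> K" "x \<in> K \<Longrightarrow> y \<in> K \<Longrightarrow> x + y \<in> K" "x \<in> K \<Longrightarrow> c *s x \<in> K" for x y c
    using K(1) by (auto simp: csubspace_def)
  obtain u where "u \<in> K" "u \<noteq> 0" using K(2) K_closed(1) by blast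
  then have "\<Psi> \<in> K"
    using GAS_target_in_dark_invariant_subspace[OF K(1) inv dark _ unit_vec_normalize \<Psi> gas]
      K_closed(3) by blast
  then show "cspan1 \<Psi> \<subseteq> K" using K_closed(3) by (auto simp: cspan1_def)
  define K' where "K' = {v \<in> K. cinner \<Psi> v = 0}"
  have K': "csubspace K'"
    using K_closed by (simp add: csubspace_def K'_def cinner_zero_right cinner_add_right cinner_scale_right)
  have inv': "\<forall>v\<in>K'. H *v v \<in> K'"
    using inv by (simp add: K'_def hermitian_cinner_mult[OF herm] eig cinner_scale_left)
  have dark': "\<forall>D\<in>set Ds. \<forall>v\<in>K'. D *v v = 0" using dark by (simp add: K'_def)
  have K'_trivial: "w = 0" if "w \<in> K'" for w
  proof (rule ccontr)
    assume "w \<noteq> 0"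
    moreover have "of_real (1 / norm w) *s w \<in> K'" using K' that by (simp add: csubspace_def)
    ultimately have "\<Psi> \<in> K'"
      by (intro GAS_target_in_dark_invariant_subspace[OF K' inv' dark' _ unit_vec_normalize \<Psi> gas])
    then show False by (simp add: K'_def unit_vec_cinner_self[OF \<Psi>])
  qed
  show "K \<subseteq> cspan1 \<Psi>"
  proof
    fix v assume "v \<in> K"
    then have "v - cinner \<Psi> v *s \<Psi> \<in> K'"
      using \<open>\<Psi> \<in> K\<close> K_closed(3) unit_vec_cinner_self[OF \<Psi>]
      by (simp add: K'_def csubspace_diff[OF K(1)] cinner_diff_right cinner_scale_right)
    then have "v = cinner \<Psi> v *s \<Psi>" using K'_trivial by fastforce
    then show "v \<in> cspan1 \<Psi>" unfolding cspan1_def by blast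
  qed
qed

theorem proposition3:
  fixes coord :: "'c::finite \<Rightarrow> 's::finite \<Rightarrow> 'l"
    and L :: "'s \<Rightarrow> 'l set"
    and Nb :: "'k::finite \<Rightarrow> 's set"
    and \<Psi> :: "complex^'c"
    and Hc :: "complex^'c^'c"
    and Ds :: "(complex^'c^'c) list"
    and h :: real
  assumes tensor: "tensor_coords coord L"
    and proper: "\<forall>k. Nb k \<subset> UNIV"
    and unit: "unit_vec \<Psi>"
    and notDQLS: "\<not> DQLS coord Nb \<Psi>"
    and Hc_QL: "QL_ham coord Nb Hc"
    and Ds_QL: "\<forall>D\<in>set Ds. QL_op coord Nb D"
    and Ds_kill: "\<forall>D\<in>set Ds. D *v \<Psi> = 0"
    and Hc_eig: "Hc *v \<Psi> = of_real h *s \<Psi>"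
    and gas: "GAS (lindblad Hc Ds) (proj \<Psi>)"
  shows "(\<forall>v\<in>cspan1 \<Psi>. Hc *v v \<in> cspan1 \<Psi>)
    \<and> \<not> (\<exists>K. csubspace K \<and> K \<noteq> {0} \<and> K \<subseteq> H0 coord Nb (proj \<Psi>)
              \<and> K \<noteq> cspan1 \<Psi> \<and> (\<forall>v\<in>K. Hc *v v \<in> K))
    \<and> (let Hc' = Hc - cmscale (of_real h) (mat 1) in
         QL_ham coord Nb Hc' \<and> Hc' *v \<Psi> = 0 \<and> GAS (lindblad Hc' Ds) (proj \<Psi>))"
proof (intro conjI)
  have "Hc *v (c *s \<Psi>) = (c * of_real h) *s \<Psi>" for c
    by (simp add: matrix_vector_mult_smult Hc_eig vector_smult_assoc)
  then show "\<forall>v\<in>cspan1 \<Psi>. Hc *v v \<in> cspan1 \<Psi>"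
    unfolding cspan1_def by blast
  have "K = cspan1 \<Psi>"
    if "csubspace K" "K \<noteq> {0}" "K \<subseteq> H0 coord Nb (proj \<Psi>)" "\<forall>v\<in>K. Hc *v v \<in> K" for K
    using that Ds_QL Ds_kill QL_annihilator_vanishes_on_H0[OF tensor]
    by (intro dark_invariant_subspace_eq_span[OF _ _ _ _ QL_ham_hermitian[OF Hc_QL] Hc_eig unit gas])
      blast+
  then show "\<not> (\<exists>K. csubspace K \<and> K \<noteq> {0} \<and> K \<subseteq> H0 coord Nb (proj \<Psi>)
              \<and> K \<noteq> cspan1 \<Psi> \<and> (\<forall>v\<in>K. Hc *v v \<in> K))"
    by blast
  have "inj coord" using tensor by (simp add: tensor_coords_def bij_betw_def)
  then show "let Hc' = Hc - cmscale (of_real h) (mat 1) in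
      QL_ham coord Nb Hc' \<and> Hc' *v \<Psi> = 0 \<and> GAS (lindblad Hc' Ds) (proj \<Psi>)"
    using Hc_QL gas
    by (simp add: QL_ham_diff_scalar lindblad_diff_scalar matrix_vector_mult_diff_rdistrib
        cmscale_mult_vec Hc_eig)
qed
end
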